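(* Let $X$ be a compact space, $Y$ a metrizable space, and $K$ a compact subspace of $C_p(X,Y)$. Then $K$ is an Eberlein compact.
   Context: All compact spaces are assumed Hausdorff. $C_p(X,Y)$ is the space of all continuous functions $X\to Y$ with the topology of pointwise convergence, and $C_p(X)=C_p(X,\mathbb{R})$. A compact space is an Eberlein compact if it is homeomorphic to a compact subspace of $C_p(T)$ for some compact space $T$ (equivalently, to a weakly compact subset of a Banach space). *)

theory Defs
  imports "HOL-Analysis.Analysis"
begin

definition Cp :: "'a topology \<Rightarrow> 'b topology \<Rightarrow> ('a \<Rightarrow> 'b) topology" where
  "Cp X Y = subtopology (product_topology (\<lambda>_. Y) (topspace X))
              {f. continuous_map X Y f \<and> f \<in> extensional (topspace X)}"

text \<open>Since HOL cannot quantify over types, the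
  carrier of T is taken in the type of real-valued functions on the points of K; this is no
  restriction (T may always be replaced by its image under evaluation in C_p(K)).\<close>
definition eberlein_compact :: "'k topology \<Rightarrow> bool" where
  "eberlein_compact K \<longleftrightarrow> compact_space K \<and> Hausdorff_space K \<and>
     (\<exists>(T :: ('k \<Rightarrow> real) topology) S. compact_space T \<and> Hausdorff_space T \<and>
        compactin (Cp T euclideanreal) S \<and>
        K homeomorphic_space subtopology (Cp T euclideanreal) S)"

end

theory Submission
  imports Defs
begin

text \<open>Every \<open>f \<in> K\<close> is recovered from the functions \<open>f \<mapsto> h (f x)\<close>, where \<open>x\<close> ranges over \<open>X\<close>
  and \<open>h\<close> over the 1-Lipschitz maps from \<open>Y\<close> (with a compatible metric) to \<open>[0,1]\<close>; these
  separate the points of \<open>K\<close> via truncated distance functions.  The 1-Lipschitz maps form a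
  compact subset \<open>L\<close> of the product \<open>\<real>\<^sup>Y\<close>, and \<open>(x, h) \<mapsto> h (f x)\<close> is jointly continuous on
  \<open>X \<times> L\<close> because \<open>h\<close> is equicontinuous.  Hence the evaluation family is a compact subset
  \<open>W\<close> of \<open>\<real>\<^sup>K\<close> consisting of continuous functions on \<open>K\<close>, and \<open>K\<close> embeds into \<open>C\<^sub>p(W)\<close>.\<close>

lemma topspace_Cp:
  "topspace (Cp X Y) = {f. continuous_map X Y f \<and> f \<in> extensional (topspace X)}"
  by (auto simp: Cp_def continuous_map_def PiE_iff extensional_def)

lemma Hausdorff_space_Cp: "Hausdorff_space Y \<Longrightarrow> Hausdorff_space (Cp X Y)"
  unfolding Cp_def by (intro Hausdorff_space_subtopology) (simp add: Hausdorff_space_product_topology)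

lemma continuous_map_Cp_eval:
  "x \<in> topspace X \<Longrightarrow> continuous_map (Cp X Y) Y (\<lambda>f. f x)"
  unfolding Cp_def by (intro continuous_map_from_subtopology continuous_map_product_projection)

lemma eberlein_compactI:
  fixes K :: "'k topology" and W :: "('k \<Rightarrow> real) set"
  assumes cK: "compact_space K" and hK: "Hausdorff_space K"
    and cW: "compactin (product_topology (\<lambda>_. euclideanreal) (topspace K)) W"
    and cont: "\<And>t. t \<in> W \<Longrightarrow> continuous_map K euclideanreal t"
    and sep: "\<And>f g. f \<in> topspace K \<Longrightarrow> g \<in> topspace K \<Longrightarrow> f \<noteq> g \<Longrightarrow> \<exists>t\<in>W. t f \<noteq> t g"
  shows "eberlein_compact K"
proof -
  define T where "T = subtopology (product_topology (\<lambda>_. euclideanreal) (topspace K)) W"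
  define E where "E = (\<lambda>f. restrict (\<lambda>t. t f) W)"
  have topT: "topspace T = W"
    using compactin_subset_topspace[OF cW] by (auto simp: T_def)
  have cT: "compact_space T"
    unfolding T_def using cW by (rule compact_space_subtopology)
  have hT: "Hausdorff_space T"
    unfolding T_def by (intro Hausdorff_space_subtopology) (simp add: Hausdorff_space_product_topology)
  have E_cont_on_T: "continuous_map T euclideanreal (E f)" if "f \<in> topspace K" for f
  proof -
    have "continuous_map T euclideanreal (\<lambda>t. t f)"
      unfolding T_def using that
      by (intro continuous_map_from_subtopology continuous_map_product_projection)
    then show ?thesis by (rule continuous_map_eq) (simp add: E_def topT)
  qed
  have E_cont: "continuous_map K (Cp T euclideanreal) E"
    unfolding Cp_def
  proof (rule continuous_map_into_subtopology)
    show "continuous_map K (product_topology (\<lambda>_. euclideanreal) (topspace T)) E"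
      unfolding continuous_map_componentwise
    proof (intro conjI ballI)
      fix t assume "t \<in> topspace T"
      then show "continuous_map K euclideanreal (\<lambda>f. E f t)"
        using cont[of t] by (simp add: E_def topT)
    qed (auto simp: E_def topT)
    show "E \<in> topspace K \<rightarrow> {f. continuous_map T euclideanreal f \<and> f \<in> extensional (topspace T)}"
      using E_cont_on_T by (auto simp: E_def topT)
  qed
  have "inj_on E (topspace K)"
  proof (rule inj_onI, rule ccontr)
    fix f g assume "f \<in> topspace K" "g \<in> topspace K" "E f = E g" "f \<noteq> g"
    then show False
      using sep by (metis E_def restrict_apply')
  qed
  then have "embedding_map K (Cp T euclideanreal) E"
    using continuous_imp_embedding_map[OF E_cont cK Hausdorff_space_Cp] by simp
  moreover have "compactin (Cp T euclideanreal) (E ` topspace K)"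
    using image_compactin[OF _ E_cont] cK by (simp add: compact_space_def)
  ultimately show ?thesis
    unfolding eberlein_compact_def
    using cK hK cT hT embedding_map_imp_homeomorphic_space by blast
qed

context Metric_space
begin

definition short_unit_maps :: "('a \<Rightarrow> real) set" where
  "short_unit_maps = {h \<in> M \<rightarrow>\<^sub>E {0..1}. \<forall>y\<in>M. \<forall>z\<in>M. \<bar>h y - h z\<bar> \<le> d y z}"

lemma compactin_short_unit_maps:
  "compactin (product_topology (\<lambda>_. euclideanreal) M) short_unit_maps"
proof -
  let ?P = "product_topology (\<lambda>_. euclideanreal) M"
  define C where "C = (\<lambda>(y,z). {h \<in> topspace ?P. \<bar>h y - h z\<bar> - d y z \<in> {..0}})"
  have cube: "compactin ?P (M \<rightarrow>\<^sub>E {0..1})"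
    by (simp add: compactin_PiE)
  have "short_unit_maps = \<Inter> (insert (M \<rightarrow>\<^sub>E {0..1}) (C ` (M \<times> M)))"
    unfolding short_unit_maps_def C_def by (auto simp: PiE_iff extensional_def)
  moreover have "closedin ?P S" if "S \<in> insert (M \<rightarrow>\<^sub>E {0..1}) (C ` (M \<times> M))" for S
  proof -
    have "closedin ?P (C (y,z))" if "y \<in> M" "z \<in> M" for y z
    proof -
      have "continuous_map ?P euclideanreal (\<lambda>h. \<bar>h y - h z\<bar> - d y z)"
        using that by (intro continuous_intros)
      then have "closedin ?P {h \<in> topspace ?P. \<bar>h y - h z\<bar> - d y z \<in> {..0}}"
        by (rule closedin_continuous_map_preimage) simp
      then show ?thesis
        unfolding C_def by simp
    qed
    moreover have "closedin ?P (M \<rightarrow>\<^sub>E {0..1})"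
      using cube by (simp add: compactin_imp_closedin Hausdorff_space_product_topology)
    ultimately show ?thesis using that by blast
  qed
  ultimately show ?thesis
    using closed_compactin_Inter[OF cube, of "insert (M \<rightarrow>\<^sub>E {0..1}) (C ` (M \<times> M))"] by simp
qed

lemma continuous_map_short_unit_map:
  assumes "h \<in> short_unit_maps"
  shows "continuous_map mtopology euclideanreal h"
proof -
  have "continuous_map mtopology Met_TC.mtopology h"
    unfolding metric_continuous_map[OF Met_TC.Metric_space_axioms]
  proof (intro conjI ballI allI impI)
    fix a and e :: real assume "a \<in> M" "0 < e"
    then show "\<exists>\<delta>>0. \<forall>z. z \<in> M \<and> d a z < \<delta> \<longrightarrow> dist (h a) (h z) < e"
      using assms unfolding short_unit_maps_def dist_real_def by force
  qed simp
  then show ?thesis by simp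
qed

text \<open>Joint continuity holds because the maps in \<open>S\<close> are equicontinuous: near \<open>(x\<^sub>0, h\<^sub>0)\<close>,
  \<open>|h (f x) - h\<^sub>0 (f x\<^sub>0)| \<le> d (f x) (f x\<^sub>0) + |h (f x\<^sub>0) - h\<^sub>0 (f x\<^sub>0)|\<close>.\<close>

lemma continuous_map_apply_short_maps:
  assumes f: "continuous_map X mtopology f"
    and short: "\<And>h y z. h \<in> S \<Longrightarrow> y \<in> M \<Longrightarrow> z \<in> M \<Longrightarrow> \<bar>h y - h z\<bar> \<le> d y z"
  shows "continuous_map (prod_topology X (subtopology (product_topology (\<lambda>_. euclideanreal) M) S))
           euclideanreal (\<lambda>(x,h). h (f x))"
proof -
  let ?P = "subtopology (product_topology (\<lambda>_. euclideanreal) M) S"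
  have "continuous_map (prod_topology X ?P) Met_TC.mtopology (\<lambda>(x,h). h (f x))"
    unfolding Met_TC.continuous_map_to_metric
  proof (intro ballI allI impI)
    fix p and e :: real assume p: "p \<in> topspace (prod_topology X ?P)" and e: "0 < e"
    then obtain x0 h0 where p0: "p = (x0,h0)" and x0: "x0 \<in> topspace X" and h0: "h0 \<in> topspace ?P"
      by (metis SigmaE topspace_prod_topology)
    have fx0: "f x0 \<in> M"
      using continuous_map_image_subset_topspace[OF f] x0 by auto
    define U1 where "U1 = {x \<in> topspace X. f x \<in> mball (f x0) (e/2)}"
    define U2 where "U2 = {h \<in> topspace ?P. h (f x0) \<in> ball (h0 (f x0)) (e/2)}"
    have "openin X U1"
      unfolding U1_def by (rule openin_continuous_map_preimage[OF f openin_mball])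
    moreover have "openin ?P U2"
    proof -
      have eval: "continuous_map ?P euclideanreal (\<lambda>h. h (f x0))"
        using fx0 by (intro continuous_map_from_subtopology continuous_map_product_projection)
      show ?thesis
        unfolding U2_def using openin_continuous_map_preimage[OF eval, of "ball (h0 (f x0)) (e/2)"] by simp
    qed
    ultimately have "openin (prod_topology X ?P) (U1 \<times> U2)"
      by (simp add: openin_prod_Times_iff)
    moreover have "p \<in> U1 \<times> U2"
      using p0 x0 h0 fx0 e by (auto simp: U1_def U2_def)
    moreover have "\<bar>h0 (f x0) - h (f x)\<bar> < e" if "x \<in> U1" "h \<in> U2" for x h
    proof -
      have fx: "f x \<in> M" and dx: "d (f x0) (f x) < e/2" and hS: "h \<in> S"
        and hh: "\<bar>h0 (f x0) - h (f x0)\<bar> < e/2"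
        using that by (auto simp: U1_def U2_def dist_real_def)
      have "\<bar>h (f x) - h (f x0)\<bar> \<le> d (f x0) (f x)"
        using short[OF hS fx fx0] commute by simp
      with dx hh show ?thesis by linarith
    qed
    ultimately show "\<exists>U. openin (prod_topology X ?P) U \<and> p \<in> U \<and>
           (\<forall>q\<in>U. (case q of (x, h) \<Rightarrow> h (f x)) \<in> Met_TC.mball (case p of (x, h) \<Rightarrow> h (f x)) e)"
      using p0 by (intro exI[of _ "U1 \<times> U2"]) (auto simp: dist_real_def)
  qed
  then show ?thesis by simp
qed

lemma truncated_dist_in_short_unit_maps:
  assumes "a \<in> M"
  shows "restrict (\<lambda>y. min (d y a) 1) M \<in> short_unit_maps"
  unfolding short_unit_maps_def
proof (intro CollectI conjI ballI)
  fix y z assume "y \<in> M" "z \<in> M"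
  then have "\<bar>d y a - d z a\<bar> \<le> d y z"
    using assms mdist_reverse_triangle[of y a z] commute by metis
  then show "\<bar>restrict (\<lambda>y. min (d y a) 1) M y - restrict (\<lambda>y. min (d y a) 1) M z\<bar> \<le> d y z"
    using \<open>y \<in> M\<close> \<open>z \<in> M\<close> by (simp add: abs_le_iff min_def)
qed auto

lemma continuous_map_Cp_short_unit_eval:
  assumes "x \<in> topspace X" and "h \<in> short_unit_maps"
  shows "continuous_map (Cp X mtopology) euclideanreal (\<lambda>f. h (f x))"
  using continuous_map_compose[OF continuous_map_Cp_eval continuous_map_short_unit_map] assms
  by (simp add: o_def)

lemma compactin_short_unit_evaluations:
  assumes X: "compact_space X" and K: "\<And>f. f \<in> K \<Longrightarrow> continuous_map X mtopology f"
  shows "compactin (product_topology (\<lambda>_. euclideanreal) K)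
           ((\<lambda>(x,h). restrict (\<lambda>f. h (f x)) K) ` (topspace X \<times> short_unit_maps))"
proof -
  let ?L = "subtopology (product_topology (\<lambda>_. euclideanreal) M) short_unit_maps"
  have topL: "topspace ?L = short_unit_maps"
    using compactin_subset_topspace[OF compactin_short_unit_maps] by auto
  have "compact_space (prod_topology X ?L)"
    using X compactin_short_unit_maps
    by (simp add: compact_space_prod_topology compact_space_subtopology)
  moreover have "continuous_map (prod_topology X ?L) (product_topology (\<lambda>_. euclideanreal) K)
                   (\<lambda>(x,h). restrict (\<lambda>f. h (f x)) K)"
    unfolding continuous_map_componentwise
  proof (intro conjI ballI)
    fix f assume "f \<in> K"
    then have "continuous_map (prod_topology X ?L) euclideanreal (\<lambda>(x,h). h (f x))"
      using K by (intro continuous_map_apply_short_maps) (auto simp: short_unit_maps_def)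
    then show "continuous_map (prod_topology X ?L) euclideanreal
                 (\<lambda>p. (case p of (x,h) \<Rightarrow> restrict (\<lambda>f. h (f x)) K) f)"
      using \<open>f \<in> K\<close> by (simp add: case_prod_unfold)
  qed auto
  ultimately show ?thesis
    using image_compactin[of "prod_topology X ?L"] topL by (simp add: compact_space_def)
qed

lemma short_unit_maps_separate:
  assumes "x \<in> M" "y \<in> M" "x \<noteq> y"
  shows "\<exists>h\<in>short_unit_maps. h x \<noteq> h y"
proof
  show "restrict (\<lambda>z. min (d z x) 1) M x \<noteq> restrict (\<lambda>z. min (d z x) 1) M y"
    using assms mdist_pos_less[of y x] by (simp add: min_def)
  show "restrict (\<lambda>z. min (d z x) 1) M \<in> short_unit_maps"
    using \<open>x \<in> M\<close> by (rule truncated_dist_in_short_unit_maps)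
qed

lemma Cp_short_unit_evaluations_separate:
  assumes f: "f \<in> topspace (Cp X mtopology)" and g: "g \<in> topspace (Cp X mtopology)" and "f \<noteq> g"
  shows "\<exists>x\<in>topspace X. \<exists>h\<in>short_unit_maps. h (f x) \<noteq> h (g x)"
proof -
  obtain x where fxgx: "f x \<noteq> g x"
    using \<open>f \<noteq> g\<close> by (meson ext)
  have "f \<in> extensional (topspace X)" "g \<in> extensional (topspace X)"
    using f g by (auto simp: topspace_Cp)
  with fxgx have x: "x \<in> topspace X"
    by (metis extensional_arb)
  have "f x \<in> M" "g x \<in> M"
    using x f g by (auto simp: topspace_Cp continuous_map_def)
  with fxgx x show ?thesis
    using short_unit_maps_separate by blast
qed

end

theorem proposition4p1:
  fixes X :: "'a topology" and Y :: "'b topology" and K :: "('a \<Rightarrow> 'b) set"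
  assumes "compact_space X" and "Hausdorff_space X"
    and "metrizable_space Y"
    and "compactin (Cp X Y) K"
  shows "eberlein_compact (subtopology (Cp X Y) K)"
proof -
  obtain M d where "Metric_space M d" and Y: "Y = Metric_space.mtopology M d"
    using assms(3) unfolding metrizable_space_def by blast
  interpret Metric_space M d by fact
  define ev :: "'a \<times> ('b \<Rightarrow> real) \<Rightarrow> ('a \<Rightarrow> 'b) \<Rightarrow> real"
    where "ev = (\<lambda>(x,h). restrict (\<lambda>f. h (f x)) K)"
  have K: "K \<subseteq> topspace (Cp X Y)" and topK: "topspace (subtopology (Cp X Y) K) = K"
    using compactin_subset_topspace[OF assms(4)] by auto
  show ?thesis
  proof (rule eberlein_compactI[where W = "ev ` (topspace X \<times> short_unit_maps)"])
    show "compact_space (subtopology (Cp X Y) K)"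
      using assms(4) by (rule compact_space_subtopology)
    show "Hausdorff_space (subtopology (Cp X Y) K)"
      using assms(3) by (intro Hausdorff_space_subtopology Hausdorff_space_Cp metrizable_imp_Hausdorff_space)
    show "compactin (product_topology (\<lambda>_. euclideanreal) (topspace (subtopology (Cp X Y) K)))
            (ev ` (topspace X \<times> short_unit_maps))"
      unfolding topK ev_def using assms(1) K Y by (intro compactin_short_unit_evaluations) (auto simp: topspace_Cp)
  next
    fix t assume "t \<in> ev ` (topspace X \<times> short_unit_maps)"
    then obtain x h where x: "x \<in> topspace X" and h: "h \<in> short_unit_maps" and t: "t = ev (x,h)"
      by blast
    have "continuous_map (subtopology (Cp X Y) K) euclideanreal (\<lambda>f. h (f x))"
      using continuous_map_Cp_short_unit_eval[OF x h] Y by (simp add: continuous_map_from_subtopology)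
    then show "continuous_map (subtopology (Cp X Y) K) euclideanreal t"
      by (rule continuous_map_eq) (simp add: t ev_def topK)
  next
    fix f g
    assume f: "f \<in> topspace (subtopology (Cp X Y) K)" and g: "g \<in> topspace (subtopology (Cp X Y) K)"
      and "f \<noteq> g"
    then have "\<exists>x\<in>topspace X. \<exists>h\<in>short_unit_maps. h (f x) \<noteq> h (g x)"
      by (intro Cp_short_unit_evaluations_separate) (simp_all add: Y)
    then obtain x h where "x \<in> topspace X" "h \<in> short_unit_maps" "h (f x) \<noteq> h (g x)"
      by blast
    then show "\<exists>t\<in>ev ` (topspace X \<times> short_unit_maps). t f \<noteq> t g"
      using f g by (intro bexI[of _ "ev (x,h)"]) (auto simp: ev_def topK)
  qed
qed

end
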